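(* Let $H$ be a separable Hilbert space and $\Psi:\Omega\to B(H)$ a strongly measurable random operator taking values in selfadjoint (orthogonal) projections, such that for some $0<C<1$, $\mathbb E\|\Psi x\|^2\ge C\|x\|^2$ for all $x\in H$. Let $\Psi_1,\Psi_2,\dots$ be i.i.d. copies of $\Psi$ and $T_k=\Psi_k(I-\Psi_{k-1})\cdots(I-\Psi_1)$. Then for every $x\in H$: $\lim_{n\to\infty}\mathbb E\|x-\sum_{k=1}^nT_kx\|^2=0$; $x=\lim_{n\to\infty}\sum_{k=1}^nT_kx$ almost surely; and \[ \lim_{n\to\infty}\mathbb E\Big[\sum_{k=1}^{n}\|T_kx\|^{2}\Big]=\|x\|^{2}, \] so $\{T_n\}_{n\in\mathbb N}$ forms a random operator-valued Parseval frame.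
   Context: A random operator $\Psi:\Omega\to B(H)$ on a probability space $(\Omega,\mathscr F,\mathbb P)$ is measurable in the strong operator sense: for each $x\in H$, $\omega\mapsto\Psi(\omega)x$ is measurable. $\mathbb E\|\Psi x\|^2=\int_\Omega\|\Psi(\omega)x\|^2d\mathbb P(\omega)$. *)

theory Defs
  imports "HOL-Probability.Probability"
begin

definition separable_space :: "'a::topological_space itself \<Rightarrow> bool" where
  "separable_space _ \<longleftrightarrow> (\<exists>D::'a set. countable D \<and> closure D = UNIV)"

definition is_orth_proj :: "('h::real_inner \<Rightarrow>\<^sub>L 'h) \<Rightarrow> bool" where
  "is_orth_proj P \<longleftrightarrow> P o\<^sub>L P = P \<and> (\<forall>x y. inner (P x) y = inner x (P y))"

definition strongly_measurable ::
  "'w measure \<Rightarrow> ('w \<Rightarrow> ('h::real_normed_vector \<Rightarrow>\<^sub>L 'h)) \<Rightarrow> bool" where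
  "strongly_measurable M \<Psi> \<longleftrightarrow> (\<forall>x. (\<lambda>\<omega>. \<Psi> \<omega> x) \<in> borel_measurable M)"

text \<open>The sigma-algebra on B(H) generated by the evaluation maps P \<mapsto> P x
  (the strong-operator Borel structure); used to express independence and
  identical distribution of random operators.\<close>
definition strong_op_measure :: "('h::real_normed_vector \<Rightarrow>\<^sub>L 'h) measure" where
  "strong_op_measure = sigma UNIV {(\<lambda>P. blinfun_apply P x) -` B | x B. B \<in> sets borel}"

text \<open>R k = (I - \<Psi>_k) \<dots> (I - \<Psi>_1), with R 0 = I (indices start at 1).\<close>
fun rem_prod :: "(nat \<Rightarrow> 'w \<Rightarrow> ('h::real_normed_vector \<Rightarrow>\<^sub>L 'h)) \<Rightarrow> nat \<Rightarrow> 'w \<Rightarrow> ('h \<Rightarrow>\<^sub>L 'h)" where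
  "rem_prod \<Psi>s 0 \<omega> = id_blinfun"
| "rem_prod \<Psi>s (Suc k) \<omega> = (id_blinfun - \<Psi>s (Suc k) \<omega>) o\<^sub>L rem_prod \<Psi>s k \<omega>"

text \<open>T_k = \<Psi>_k (I - \<Psi>_{k-1}) \<dots> (I - \<Psi>_1) for k \<ge> 1 (T_0 is unused, set to 0).\<close>
fun T_op :: "(nat \<Rightarrow> 'w \<Rightarrow> ('h::real_normed_vector \<Rightarrow>\<^sub>L 'h)) \<Rightarrow> nat \<Rightarrow> 'w \<Rightarrow> ('h \<Rightarrow>\<^sub>L 'h)" where
  "T_op \<Psi>s 0 \<omega> = 0"
| "T_op \<Psi>s (Suc k) \<omega> = \<Psi>s (Suc k) \<omega> o\<^sub>L rem_prod \<Psi>s k \<omega>"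

end

theory Submission
  imports Defs
begin

text \<open>
  Write \<open>R\<^sub>n = (I - \<Psi>\<^sub>n) \<cdots> (I - \<Psi>\<^sub>1)\<close>; then \<open>x - \<Sum>\<^sub>k\<^sub>\<le>\<^sub>n T\<^sub>k x = R\<^sub>n x\<close> telescopes.
  The operator \<open>\<Psi>\<^sub>n\<^sub>+\<^sub>1\<close> is independent of \<open>R\<^sub>n\<close> and distributed like \<open>\<Psi>\<close>, so it may be
  integrated out for each fixed value \<open>y = R\<^sub>n x\<close>. By Pythagoras for the projection \<open>\<Psi>\<close> this gives
  \<open>E\<parallel>T\<^sub>n\<^sub>+\<^sub>1 x\<parallel>\<^sup>2 + E\<parallel>R\<^sub>n\<^sub>+\<^sub>1 x\<parallel>\<^sup>2 = E\<parallel>R\<^sub>n x\<parallel>\<^sup>2\<close>, and the hypothesis on \<open>E\<parallel>\<Psi> y\<parallel>\<^sup>2\<close> gives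
  \<open>E\<parallel>R\<^sub>n\<^sub>+\<^sub>1 x\<parallel>\<^sup>2 \<le> (1 - C) E\<parallel>R\<^sub>n x\<parallel>\<^sup>2\<close>. Hence \<open>E\<parallel>R\<^sub>n x\<parallel>\<^sup>2 \<le> (1 - C)\<^sup>n \<parallel>x\<parallel>\<^sup>2\<close>: this is the
  mean-square convergence, its summability gives almost sure convergence, and summing the
  first identity gives \<open>E \<Sum>\<^sub>k\<^sub>\<le>\<^sub>n \<parallel>T\<^sub>k x\<parallel>\<^sup>2 = \<parallel>x\<parallel>\<^sup>2 - E\<parallel>R\<^sub>n x\<parallel>\<^sup>2\<close>.
  Separability of \<open>H\<close> is needed only for measurability: it makes \<open>(P, v) \<mapsto> P v\<close> jointly
  measurable for the strong operator \<sigma>-algebra.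
\<close>

lemma borel_measurable_Caratheodory:
  fixes G :: "'a \<Rightarrow> 'h::real_normed_vector \<Rightarrow> 'b::metric_space"
  assumes "separable_space TYPE('h)"
    and G_measurable: "\<And>v. (\<lambda>a. G a v) \<in> borel_measurable N"
    and G_continuous: "\<And>a v. isCont (G a) v"
    and Y: "Y \<in> borel_measurable N"
  shows "(\<lambda>a. G a (Y a)) \<in> borel_measurable N"
proof -
  obtain D :: "'h set" where D: "countable D" "closure D = UNIV"
    using assms(1) unfolding separable_space_def by blast
  then have "D \<noteq> {}" by (metis closure_empty empty_not_UNIV)
  define d where "d = from_nat_into D"
  have d: "range d = D"
    unfolding d_def using D \<open>D \<noteq> {}\<close> by (simp add: range_from_nat_into)
  have dense: "\<exists>j. dist (Y a) (d j) < e" if "e > 0" for a e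
  proof -
    obtain z where "z \<in> D" "dist z (Y a) < e"
      using closure_approachable[of "Y a" D] D(2) \<open>e > 0\<close> by blast
    with d show ?thesis by (metis dist_commute rangeE)
  qed
  define idx where "idx m a = (LEAST j. dist (Y a) (d j) < 1 / Suc m)" for m a
  have idx_measurable: "idx m \<in> measurable N (count_space UNIV)" for m
  proof -
    have [measurable]: "(\<lambda>a. dist (Y a) (d j)) \<in> borel_measurable N" for j
      by (rule borel_measurable_continuous_on[OF _ Y]) (intro continuous_intros)
    show ?thesis unfolding idx_def by measurable
  qed
  show ?thesis
  proof (rule borel_measurable_LIMSEQ_metric)
    show "(\<lambda>a. G a (d (idx m a))) \<in> borel_measurable N" for m
      by (rule measurable_compose_countable[where f="\<lambda>j a. G a (d j)", OF G_measurable idx_measurable])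
    fix a
    have "dist (Y a) (d (idx m a)) < 1 / Suc m" for m
      unfolding idx_def by (rule LeastI_ex) (rule dense, simp)
    then have "dist (d (idx m a)) (Y a) \<le> 1 / Suc m" for m
      by (simp add: dist_commute less_imp_le)
    then have "(\<lambda>m. dist (d (idx m a)) (Y a)) \<longlonglongrightarrow> 0"
      by (intro tendsto_sandwich[OF _ _ tendsto_const LIMSEQ_Suc[OF lim_inverse_n']]) (auto intro!: always_eventually)
    then have "(\<lambda>m. d (idx m a)) \<longlonglongrightarrow> Y a"
      using tendsto_dist_iff by blast
    then show "(\<lambda>m. G a (d (idx m a))) \<longlonglongrightarrow> G a (Y a)"
      using G_continuous isCont_tendsto_compose by blast
  qed
qed

lemma measurable_strong_op_eval[measurable]:
  "(\<lambda>P. blinfun_apply P x) \<in> borel_measurable strong_op_measure"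
proof (rule measurableI)
  fix A :: "'a set" assume "A \<in> sets borel"
  then show "(\<lambda>P. blinfun_apply P x) -` A \<inter> space strong_op_measure \<in> sets strong_op_measure"
    unfolding strong_op_measure_def by (auto simp: sets_measure_of intro: sigma_sets.Basic)
qed simp

lemma strongly_measurable_iff_measurable:
  fixes F :: "'a \<Rightarrow> ('h::real_normed_vector \<Rightarrow>\<^sub>L 'h)"
  shows "strongly_measurable N F \<longleftrightarrow> F \<in> measurable N strong_op_measure"
proof
  assume F: "strongly_measurable N F"
  show "F \<in> measurable N strong_op_measure"
    unfolding strong_op_measure_def
  proof (rule measurable_measure_of)
    fix A assume "A \<in> {(\<lambda>P::'h \<Rightarrow>\<^sub>L 'h. blinfun_apply P x) -` B | x B. B \<in> sets borel}"
    then obtain x B where "A = (\<lambda>P. blinfun_apply P x) -` B" "B \<in> sets borel" by blast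
    moreover have "(\<lambda>a. F a x) \<in> borel_measurable N"
      using F unfolding strongly_measurable_def by blast
    ultimately show "F -` A \<inter> space N \<in> sets N"
      by (auto dest: measurable_sets simp: vimage_def)
  qed auto
qed (simp add: strongly_measurable_def)

lemma measurable_strong_op_apply:
  assumes "separable_space TYPE('h::real_normed_vector)"
  shows "(\<lambda>(P, v). blinfun_apply P v) \<in> borel_measurable (strong_op_measure \<Otimes>\<^sub>M (borel :: 'h measure))"
proof -
  have "(\<lambda>z. blinfun_apply (fst z) (snd z)) \<in> borel_measurable (strong_op_measure \<Otimes>\<^sub>M (borel :: 'h measure))"
    by (rule borel_measurable_Caratheodory[OF assms])
       (simp_all add: linear_continuous_at blinfun.bounded_linear_right)
  then show ?thesis by (simp add: case_prod_beta')
qed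

text \<open>Without second countability, \<open>borel \<Otimes>\<^sub>M borel\<close> may be smaller than the Borel sets of
  \<open>'h \<times> 'h\<close>, so even subtraction needs separability to be measurable for it.\<close>

lemma measurable_separable_diff:
  assumes "separable_space TYPE('h::real_normed_vector)"
  shows "(\<lambda>(u, v). u - v) \<in> borel_measurable ((borel :: 'h measure) \<Otimes>\<^sub>M borel)"
proof -
  have "(\<lambda>z. fst z - snd z) \<in> borel_measurable ((borel :: 'h measure) \<Otimes>\<^sub>M borel)"
    by (rule borel_measurable_Caratheodory[OF assms])
       (auto intro!: borel_measurable_continuous_on[OF _ measurable_fst] continuous_intros)
  then show ?thesis by (simp add: case_prod_beta')
qed

lemma rem_prod_Suc_apply:
  "rem_prod F (Suc j) a x = rem_prod F j a x - F (Suc j) a (rem_prod F j a x)"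
  by (simp add: blinfun.diff_left)

lemma measurable_rem_prod:
  fixes F :: "nat \<Rightarrow> 'a \<Rightarrow> ('h::real_normed_vector \<Rightarrow>\<^sub>L 'h)"
  assumes sep: "separable_space TYPE('h)"
    and F: "\<And>k. k \<in> {1..j} \<Longrightarrow> F k \<in> measurable N strong_op_measure"
  shows "(\<lambda>a. rem_prod F j a x) \<in> borel_measurable N"
  using F
proof (induction j)
  case (Suc j)
  note measurable_strong_op_apply[OF sep, measurable] measurable_separable_diff[OF sep, measurable]
  have [measurable]: "F (Suc j) \<in> measurable N strong_op_measure"
    and [measurable]: "(\<lambda>a. rem_prod F j a x) \<in> borel_measurable N"
    using Suc by simp_all
  show ?case unfolding rem_prod_Suc_apply by measurable
qed simp

lemma rem_prod_cong:
  assumes "\<And>i. i \<in> {1..j} \<Longrightarrow> F i a = G i b"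
  shows "rem_prod F j a = rem_prod G j b"
  using assms by (induction j) auto

lemma sum_T_op_eq_diff_rem_prod:
  "(\<Sum>k=1..n. T_op F k a x) = x - rem_prod F n a x"
  by (induction n) (simp_all add: blinfun.diff_left)

lemma orth_proj_pythagoras:
  assumes "is_orth_proj P"
  shows "(norm (P y))\<^sup>2 + (norm (y - P y))\<^sup>2 = (norm y)\<^sup>2"
proof -
  have "inner (P y) (P y) = inner y (P y)"
    using assms unfolding is_orth_proj_def by (metis blinfun_apply_blinfun_compose)
  then have "inner (P y) (y - P y) = 0"
    by (simp add: inner_diff_right inner_commute)
  then show ?thesis
    using norm_add_Pythagorean[of "P y" "y - P y"] by (simp add: orthogonal_def)
qed

lemma enn2real_add_eq_if_add_eq_ennreal:
  assumes "a + b = ennreal c" and "0 \<le> c"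
  shows "enn2real a + enn2real b = c"
  using assms by (metis enn2real_ennreal enn2real_plus ennreal_add_eq_top ennreal_neq_top less_top)

lemma (in prob_space) nn_integral_indep_var:
  assumes "indep_var S X T Z" and g[measurable]: "g \<in> borel_measurable (S \<Otimes>\<^sub>M T)"
  shows "(\<integral>\<^sup>+\<omega>. g (X \<omega>, Z \<omega>) \<partial>M) = (\<integral>\<^sup>+\<omega>. \<integral>\<^sup>+\<omega>'. g (X \<omega>, Z \<omega>') \<partial>M \<partial>M)"
proof -
  have X[measurable]: "X \<in> measurable M S" and Z[measurable]: "Z \<in> measurable M T"
    and joint: "distr M S X \<Otimes>\<^sub>M distr M T Z = distr M (S \<Otimes>\<^sub>M T) (\<lambda>\<omega>. (X \<omega>, Z \<omega>))"
    using assms(1) unfolding indep_var_distribution_eq by auto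
  interpret Z: prob_space "distr M T Z" by (rule prob_space_distr) simp
  have "(\<integral>\<^sup>+\<omega>. g (X \<omega>, Z \<omega>) \<partial>M) = (\<integral>\<^sup>+z. g z \<partial>(distr M S X \<Otimes>\<^sub>M distr M T Z))"
    unfolding joint by (rule nn_integral_distr[symmetric]) simp_all
  also have "\<dots> = (\<integral>\<^sup>+p. \<integral>\<^sup>+q. g (p, q) \<partial>distr M T Z \<partial>distr M S X)"
    using g measurable_cong_sets[OF sets_pair_measure_cong[OF sets_distr sets_distr] refl]
    by (intro Z.nn_integral_fst[symmetric]) blast
  also have "\<dots> = (\<integral>\<^sup>+p. \<integral>\<^sup>+\<omega>'. g (p, Z \<omega>') \<partial>M \<partial>distr M S X)"
    by (intro nn_integral_cong nn_integral_distr) simp_all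
  also have "\<dots> = (\<integral>\<^sup>+\<omega>. \<integral>\<^sup>+\<omega>'. g (X \<omega>, Z \<omega>') \<partial>M \<partial>M)"
    by (intro nn_integral_distr borel_measurable_nn_integral) simp_all
  finally show ?thesis .
qed

lemma AE_LIMSEQ_zero_if_suminf_nn_integral_finite:
  fixes f :: "nat \<Rightarrow> 'a \<Rightarrow> real"
  assumes f[measurable]: "\<And>n. f n \<in> borel_measurable M"
    and f_nonneg: "\<And>n x. 0 \<le> f n x"
    and finite: "(\<Sum>n. \<integral>\<^sup>+x. f n x \<partial>M) \<noteq> \<infinity>"
  shows "AE x in M. (\<lambda>n. f n x) \<longlonglongrightarrow> 0"
proof -
  have "(\<integral>\<^sup>+x. (\<Sum>n. ennreal (f n x)) \<partial>M) = (\<Sum>n. \<integral>\<^sup>+x. f n x \<partial>M)"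
    by (rule nn_integral_suminf) measurable
  with finite have "AE x in M. (\<Sum>n. ennreal (f n x)) \<noteq> \<infinity>"
    by (intro nn_integral_PInf_AE) simp_all
  then show ?thesis
  proof eventually_elim
    fix x assume "(\<Sum>n. ennreal (f n x)) \<noteq> \<infinity>"
    then have "summable (\<lambda>n. f n x)"
      using f_nonneg by (intro summable_suminf_not_top) auto
    then show "(\<lambda>n. f n x) \<longlonglongrightarrow> 0"
      by (rule summable_LIMSEQ_zero)
  qed
qed

locale iid_random_projections = prob_space M for M :: "'w measure" +
  fixes \<Psi> :: "'w \<Rightarrow> ('h::{real_inner, complete_space} \<Rightarrow>\<^sub>L 'h)"
    and \<Psi>s :: "nat \<Rightarrow> 'w \<Rightarrow> ('h \<Rightarrow>\<^sub>L 'h)"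
    and C :: real
  assumes separable: "separable_space TYPE('h)"
    and strongly_measurable_\<Psi>: "strongly_measurable M \<Psi>"
    and orth_proj_\<Psi>: "\<forall>\<omega>\<in>space M. is_orth_proj (\<Psi> \<omega>)"
    and C_pos: "0 < C" and C_less_1: "C < 1"
    and expectation_\<Psi>_ge: "\<forall>x. (\<integral>\<omega>. (norm (\<Psi> \<omega> x))\<^sup>2 \<partial>M) \<ge> C * (norm x)\<^sup>2"
    and strongly_measurable_\<Psi>s: "\<forall>k\<ge>1. strongly_measurable M (\<Psi>s k)"
    and indep_\<Psi>s: "indep_vars (\<lambda>_. strong_op_measure) \<Psi>s {1..}"
    and distr_\<Psi>s: "\<forall>k\<ge>1. distr M strong_op_measure (\<Psi>s k) = distr M strong_op_measure \<Psi>"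
begin

lemmas [measurable] = measurable_strong_op_apply[OF separable] measurable_separable_diff[OF separable]

lemma measurable_\<Psi>[measurable]: "\<Psi> \<in> measurable M strong_op_measure"
  using strongly_measurable_\<Psi> by (simp add: strongly_measurable_iff_measurable)

lemma measurable_\<Psi>s[measurable]: "\<Psi>s (Suc k) \<in> measurable M strong_op_measure"
  using strongly_measurable_\<Psi>s by (simp add: strongly_measurable_iff_measurable)

lemma measurable_rem_prod_\<Psi>s[measurable]: "(\<lambda>\<omega>. rem_prod \<Psi>s j \<omega> x) \<in> borel_measurable M"
  using strongly_measurable_\<Psi>s
  by (intro measurable_rem_prod[OF separable]) (simp add: strongly_measurable_iff_measurable)

lemma measurable_T_op_\<Psi>s[measurable]: "(\<lambda>\<omega>. T_op \<Psi>s k \<omega> x) \<in> borel_measurable M"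
  by (cases k) simp_all

lemma measurable_pair_apply[measurable]:
  "(\<lambda>z::'h \<times> ('h \<Rightarrow>\<^sub>L 'h). blinfun_apply (snd z) (fst z)) \<in> borel_measurable (borel \<Otimes>\<^sub>M strong_op_measure)"
  by (rule measurable_Pair_compose_split[OF measurable_strong_op_apply[OF separable]]) measurable

text \<open>\<open>R\<^sub>j\<close> is the function \<open>rem_prod (\<lambda>i p. p i) j\<close> of the coordinates \<open>1..j\<close> of the process,
  which are independent of coordinate \<open>j + 1\<close>; identical distribution then replaces \<open>\<Psi>\<^sub>j\<^sub>+\<^sub>1\<close> by \<open>\<Psi>\<close>.\<close>

lemma nn_integral_next_operator:
  assumes g[measurable]: "g \<in> borel_measurable (borel \<Otimes>\<^sub>M strong_op_measure)"
  shows "(\<integral>\<^sup>+\<omega>. g (rem_prod \<Psi>s j \<omega> x, \<Psi>s (Suc j) \<omega>) \<partial>M)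
       = (\<integral>\<^sup>+\<omega>. \<integral>\<^sup>+\<omega>'. g (rem_prod \<Psi>s j \<omega> x, \<Psi> \<omega>') \<partial>M \<partial>M)"
proof -
  let ?past = "\<lambda>\<omega>. restrict (\<lambda>i. \<Psi>s i \<omega>) {1..j}"
  let ?next = "\<lambda>\<omega>. restrict (\<lambda>i. \<Psi>s i \<omega>) {Suc j}"
  let ?Past = "PiM {1..j} (\<lambda>_. strong_op_measure :: ('h \<Rightarrow>\<^sub>L 'h) measure)"
  let ?Next = "PiM {Suc j} (\<lambda>_. strong_op_measure :: ('h \<Rightarrow>\<^sub>L 'h) measure)"
  define h where "h = (\<lambda>(p, q). g (rem_prod (\<lambda>i p. p i) j p x, q (Suc j)))"
  have "(\<lambda>p. rem_prod (\<lambda>i p. p i) j p x) \<in> borel_measurable ?Past"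
    by (intro measurable_rem_prod[OF separable] measurable_component_singleton) auto
  then have "h \<in> borel_measurable (?Past \<Otimes>\<^sub>M ?Next)"
    unfolding h_def by measurable
  moreover have "indep_var ?Past ?past ?Next ?next"
    by (rule indep_var_restrict[OF indep_\<Psi>s]) auto
  ultimately have "(\<integral>\<^sup>+\<omega>. h (?past \<omega>, ?next \<omega>) \<partial>M) = (\<integral>\<^sup>+\<omega>. \<integral>\<^sup>+\<omega>'. h (?past \<omega>, ?next \<omega>') \<partial>M \<partial>M)"
    by (intro nn_integral_indep_var)
  moreover have "rem_prod (\<lambda>i p. p i) j (?past \<omega>) = rem_prod \<Psi>s j \<omega>" for \<omega>
    by (rule rem_prod_cong) simp
  moreover have "(\<integral>\<^sup>+\<omega>'. g (y, \<Psi>s (Suc j) \<omega>') \<partial>M) = (\<integral>\<^sup>+\<omega>'. g (y, \<Psi> \<omega>') \<partial>M)" for y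
  proof -
    have "(\<integral>\<^sup>+\<omega>'. g (y, \<Psi>s (Suc j) \<omega>') \<partial>M) = (\<integral>\<^sup>+P. g (y, P) \<partial>distr M strong_op_measure (\<Psi>s (Suc j)))"
      by (simp add: nn_integral_distr)
    also have "\<dots> = (\<integral>\<^sup>+P. g (y, P) \<partial>distr M strong_op_measure \<Psi>)"
      using distr_\<Psi>s by simp
    finally show ?thesis by (simp add: nn_integral_distr)
  qed
  ultimately show ?thesis by (simp add: h_def)
qed

lemma nn_integral_orth_proj_split:
  "(\<integral>\<^sup>+\<omega>. ennreal ((norm (\<Psi> \<omega> y))\<^sup>2 + (norm (y - \<Psi> \<omega> y))\<^sup>2) \<partial>M) = (norm y)\<^sup>2"
proof -
  have "(\<integral>\<^sup>+\<omega>. ennreal ((norm (\<Psi> \<omega> y))\<^sup>2 + (norm (y - \<Psi> \<omega> y))\<^sup>2) \<partial>M) = (\<integral>\<^sup>+\<omega>. (norm y)\<^sup>2 \<partial>M)"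
    using orth_proj_\<Psi> by (intro nn_integral_cong) (simp add: orth_proj_pythagoras)
  then show ?thesis by (simp add: emeasure_space_1)
qed

lemma nn_integral_residual_le:
  "(\<integral>\<^sup>+\<omega>. (norm (y - \<Psi> \<omega> y))\<^sup>2 \<partial>M) \<le> (1 - C) * (norm y)\<^sup>2"
proof -
  let ?P = "\<integral>\<^sup>+\<omega>. (norm (\<Psi> \<omega> y))\<^sup>2 \<partial>M" and ?R = "\<integral>\<^sup>+\<omega>. (norm (y - \<Psi> \<omega> y))\<^sup>2 \<partial>M"
  have sum: "?P + ?R = (norm y)\<^sup>2"
    using nn_integral_orth_proj_split[of y] by (simp add: nn_integral_add)
  then have real_sum: "enn2real ?P + enn2real ?R = (norm y)\<^sup>2"
    by (rule enn2real_add_eq_if_add_eq_ennreal) simp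
  from sum have "?R < \<top>"
    by (metis ennreal_add_eq_top ennreal_neq_top less_top)
  have "C * (norm y)\<^sup>2 \<le> enn2real ?P"
    using expectation_\<Psi>_ge by (simp add: integral_eq_nn_integral)
  with real_sum have "enn2real ?R \<le> (1 - C) * (norm y)\<^sup>2"
    by (simp add: algebra_simps)
  with \<open>?R < \<top>\<close> show ?thesis
    by (metis ennreal_enn2real ennreal_leI)
qed

lemma nn_integral_T_op_add_rem_prod:
  "(\<integral>\<^sup>+\<omega>. (norm (T_op \<Psi>s (Suc j) \<omega> x))\<^sup>2 \<partial>M) + (\<integral>\<^sup>+\<omega>. (norm (rem_prod \<Psi>s (Suc j) \<omega> x))\<^sup>2 \<partial>M)
   = (\<integral>\<^sup>+\<omega>. (norm (rem_prod \<Psi>s j \<omega> x))\<^sup>2 \<partial>M)"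
proof -
  define g :: "'h \<times> ('h \<Rightarrow>\<^sub>L 'h) \<Rightarrow> ennreal"
    where "g = (\<lambda>z. ennreal ((norm (blinfun_apply (snd z) (fst z)))\<^sup>2 + (norm (fst z - blinfun_apply (snd z) (fst z)))\<^sup>2))"
  have [measurable]: "g \<in> borel_measurable (borel \<Otimes>\<^sub>M strong_op_measure)"
    unfolding g_def by measurable
  have "(\<integral>\<^sup>+\<omega>. (norm (T_op \<Psi>s (Suc j) \<omega> x))\<^sup>2 \<partial>M) + (\<integral>\<^sup>+\<omega>. (norm (rem_prod \<Psi>s (Suc j) \<omega> x))\<^sup>2 \<partial>M)
      = (\<integral>\<^sup>+\<omega>. ennreal ((norm (T_op \<Psi>s (Suc j) \<omega> x))\<^sup>2) + ennreal ((norm (rem_prod \<Psi>s (Suc j) \<omega> x))\<^sup>2) \<partial>M)"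
    by (rule nn_integral_add[symmetric]) measurable
  also have "\<dots> = (\<integral>\<^sup>+\<omega>. g (rem_prod \<Psi>s j \<omega> x, \<Psi>s (Suc j) \<omega>) \<partial>M)"
    unfolding g_def rem_prod_Suc_apply T_op.simps blinfun_apply_blinfun_compose
    by (simp add: ennreal_plus)
  also have "\<dots> = (\<integral>\<^sup>+\<omega>. \<integral>\<^sup>+\<omega>'. g (rem_prod \<Psi>s j \<omega> x, \<Psi> \<omega>') \<partial>M \<partial>M)"
    by (rule nn_integral_next_operator) measurable
  also have "\<dots> = (\<integral>\<^sup>+\<omega>. (norm (rem_prod \<Psi>s j \<omega> x))\<^sup>2 \<partial>M)"
    by (simp only: g_def fst_conv snd_conv nn_integral_orth_proj_split)
  finally show ?thesis .
qed

lemma nn_integral_rem_prod_Suc_le: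
  "(\<integral>\<^sup>+\<omega>. (norm (rem_prod \<Psi>s (Suc j) \<omega> x))\<^sup>2 \<partial>M)
   \<le> ennreal (1 - C) * (\<integral>\<^sup>+\<omega>. (norm (rem_prod \<Psi>s j \<omega> x))\<^sup>2 \<partial>M)"
proof -
  define g :: "'h \<times> ('h \<Rightarrow>\<^sub>L 'h) \<Rightarrow> ennreal" where "g = (\<lambda>z. (norm (fst z - blinfun_apply (snd z) (fst z)))\<^sup>2)"
  have [measurable]: "g \<in> borel_measurable (borel \<Otimes>\<^sub>M strong_op_measure)"
    unfolding g_def by measurable
  have "(\<integral>\<^sup>+\<omega>. (norm (rem_prod \<Psi>s (Suc j) \<omega> x))\<^sup>2 \<partial>M) = (\<integral>\<^sup>+\<omega>. g (rem_prod \<Psi>s j \<omega> x, \<Psi>s (Suc j) \<omega>) \<partial>M)"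
    unfolding g_def rem_prod_Suc_apply by simp
  also have "\<dots> = (\<integral>\<^sup>+\<omega>. \<integral>\<^sup>+\<omega>'. g (rem_prod \<Psi>s j \<omega> x, \<Psi> \<omega>') \<partial>M \<partial>M)"
    by (rule nn_integral_next_operator) measurable
  also have "\<dots> \<le> (\<integral>\<^sup>+\<omega>. ennreal (1 - C) * (norm (rem_prod \<Psi>s j \<omega> x))\<^sup>2 \<partial>M)"
    unfolding g_def using C_less_1
    by (intro nn_integral_mono) (simp add: nn_integral_residual_le flip: ennreal_mult)
  also have "\<dots> = ennreal (1 - C) * (\<integral>\<^sup>+\<omega>. (norm (rem_prod \<Psi>s j \<omega> x))\<^sup>2 \<partial>M)"
    using C_less_1 by (simp add: ennreal_mult nn_integral_cmult)
  finally show ?thesis .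
qed

lemma nn_integral_rem_prod_le:
  "(\<integral>\<^sup>+\<omega>. (norm (rem_prod \<Psi>s n \<omega> x))\<^sup>2 \<partial>M) \<le> ennreal ((1 - C) ^ n * (norm x)\<^sup>2)"
proof (induction n)
  case 0
  then show ?case by (simp add: emeasure_space_1)
next
  case (Suc n)
  have "(\<integral>\<^sup>+\<omega>. (norm (rem_prod \<Psi>s (Suc n) \<omega> x))\<^sup>2 \<partial>M)
        \<le> ennreal (1 - C) * (\<integral>\<^sup>+\<omega>. (norm (rem_prod \<Psi>s n \<omega> x))\<^sup>2 \<partial>M)"
    by (rule nn_integral_rem_prod_Suc_le)
  also have "\<dots> \<le> ennreal (1 - C) * ennreal ((1 - C) ^ n * (norm x)\<^sup>2)"
    by (intro mult_left_mono Suc.IH) simp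
  also have "\<dots> = ennreal ((1 - C) ^ Suc n * (norm x)\<^sup>2)"
    using C_less_1 by (simp add: ennreal_mult[symmetric] mult.assoc)
  finally show ?case .
qed

lemma nn_integral_sum_T_op_add_rem_prod:
  "(\<integral>\<^sup>+\<omega>. (\<Sum>k=1..n. (norm (T_op \<Psi>s k \<omega> x))\<^sup>2) \<partial>M) + (\<integral>\<^sup>+\<omega>. (norm (rem_prod \<Psi>s n \<omega> x))\<^sup>2 \<partial>M)
   = (norm x)\<^sup>2"
proof (induction n)
  case 0
  then show ?case by (simp add: emeasure_space_1)
next
  case (Suc n)
  have "(\<integral>\<^sup>+\<omega>. (\<Sum>k=1..Suc n. (norm (T_op \<Psi>s k \<omega> x))\<^sup>2) \<partial>M)
      = (\<integral>\<^sup>+\<omega>. (\<Sum>k=1..n. (norm (T_op \<Psi>s k \<omega> x))\<^sup>2) \<partial>M) + (\<integral>\<^sup>+\<omega>. (norm (T_op \<Psi>s (Suc n) \<omega> x))\<^sup>2 \<partial>M)"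
    by (simp add: nn_integral_add sum_nonneg)
  with Suc.IH nn_integral_T_op_add_rem_prod[of n x] show ?case
    by (simp add: add.assoc)
qed

lemma integral_rem_prod_le:
  "(\<integral>\<omega>. (norm (rem_prod \<Psi>s n \<omega> x))\<^sup>2 \<partial>M) \<le> (1 - C) ^ n * (norm x)\<^sup>2"
  using nn_integral_rem_prod_le[of n x] C_less_1 by (simp add: integral_eq_nn_integral enn2real_leI)

lemma tendsto_integral_rem_prod_zero:
  "(\<lambda>n. \<integral>\<omega>. (norm (rem_prod \<Psi>s n \<omega> x))\<^sup>2 \<partial>M) \<longlonglongrightarrow> 0"
proof (rule tendsto_sandwich[OF _ _ tendsto_const])
  have "(\<lambda>n. (1 - C) ^ n) \<longlonglongrightarrow> 0"
    using C_pos C_less_1 by (intro LIMSEQ_power_zero) simp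
  then show "(\<lambda>n. (1 - C) ^ n * (norm x)\<^sup>2) \<longlonglongrightarrow> 0"
    by (intro tendsto_mult_left_zero)
qed (simp_all add: integral_rem_prod_le)

lemma integral_sum_T_op:
  "(\<integral>\<omega>. (\<Sum>k=1..n. (norm (T_op \<Psi>s k \<omega> x))\<^sup>2) \<partial>M) = (norm x)\<^sup>2 - (\<integral>\<omega>. (norm (rem_prod \<Psi>s n \<omega> x))\<^sup>2 \<partial>M)"
  using enn2real_add_eq_if_add_eq_ennreal[OF nn_integral_sum_T_op_add_rem_prod[of x n]]
  by (simp add: integral_eq_nn_integral sum_nonneg eq_diff_eq)

lemma AE_rem_prod_LIMSEQ_zero: "AE \<omega> in M. (\<lambda>n. rem_prod \<Psi>s n \<omega> x) \<longlonglongrightarrow> 0"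
proof -
  have "(\<Sum>n. \<integral>\<^sup>+\<omega>. (norm (rem_prod \<Psi>s n \<omega> x))\<^sup>2 \<partial>M) \<le> (\<Sum>n. ennreal ((1 - C) ^ n * (norm x)\<^sup>2))"
    by (intro suminf_le nn_integral_rem_prod_le) auto
  also have "\<dots> = ennreal (\<Sum>n. (1 - C) ^ n * (norm x)\<^sup>2)"
    using C_pos C_less_1 by (intro suminf_ennreal2 summable_mult2 summable_geometric) auto
  finally have "(\<Sum>n. \<integral>\<^sup>+\<omega>. (norm (rem_prod \<Psi>s n \<omega> x))\<^sup>2 \<partial>M) \<noteq> \<infinity>"
    unfolding infinity_ennreal_def by (rule neq_top_trans[OF ennreal_neq_top])
  then have "AE \<omega> in M. (\<lambda>n. (norm (rem_prod \<Psi>s n \<omega> x))\<^sup>2) \<longlonglongrightarrow> 0"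
    by (intro AE_LIMSEQ_zero_if_suminf_nn_integral_finite) simp_all
  then show ?thesis
  proof eventually_elim
    fix \<omega> assume "(\<lambda>n. (norm (rem_prod \<Psi>s n \<omega> x))\<^sup>2) \<longlonglongrightarrow> 0"
    then have "(\<lambda>n. sqrt ((norm (rem_prod \<Psi>s n \<omega> x))\<^sup>2)) \<longlonglongrightarrow> sqrt 0"
      by (rule tendsto_real_sqrt)
    then have "(\<lambda>n. norm (rem_prod \<Psi>s n \<omega> x)) \<longlonglongrightarrow> 0"
      by simp
    then show "(\<lambda>n. rem_prod \<Psi>s n \<omega> x) \<longlonglongrightarrow> 0"
      by (simp only: tendsto_norm_zero_iff)
  qed
qed

end

theorem mainTheorem5:
  fixes M :: "'w measure"
    and \<Psi> :: "'w \<Rightarrow> ('h::{real_inner, complete_space} \<Rightarrow>\<^sub>L 'h)"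
    and \<Psi>s :: "nat \<Rightarrow> 'w \<Rightarrow> ('h \<Rightarrow>\<^sub>L 'h)"
    and C :: real
  assumes "prob_space M"
    and "separable_space TYPE('h)"
    and "strongly_measurable M \<Psi>"
    and "\<forall>\<omega>\<in>space M. is_orth_proj (\<Psi> \<omega>)"
    and "0 < C" and "C < 1"
    and "\<forall>x. (\<integral>\<omega>. (norm (\<Psi> \<omega> x))\<^sup>2 \<partial>M) \<ge> C * (norm x)\<^sup>2"
    and "\<forall>k\<ge>1. strongly_measurable M (\<Psi>s k)"
    and "prob_space.indep_vars M (\<lambda>_. strong_op_measure) \<Psi>s {1..}"
    and "\<forall>k\<ge>1. distr M strong_op_measure (\<Psi>s k) = distr M strong_op_measure \<Psi>"
  shows "\<forall>x. ((\<lambda>n. \<integral>\<omega>. (norm (x - (\<Sum>k=1..n. T_op \<Psi>s k \<omega> x)))\<^sup>2 \<partial>M) \<longlonglongrightarrow> 0)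
           \<and> (AE \<omega> in M. (\<lambda>n. \<Sum>k=1..n. T_op \<Psi>s k \<omega> x) \<longlonglongrightarrow> x)
           \<and> ((\<lambda>n. \<integral>\<omega>. (\<Sum>k=1..n. (norm (T_op \<Psi>s k \<omega> x))\<^sup>2) \<partial>M) \<longlonglongrightarrow> (norm x)\<^sup>2)"
proof -
  interpret iid_random_projections M \<Psi> \<Psi>s C
    using assms by (simp add: iid_random_projections_def iid_random_projections_axioms_def)
  show ?thesis
  proof (intro allI conjI)
    fix x :: 'h
    show "(\<lambda>n. \<integral>\<omega>. (norm (x - (\<Sum>k=1..n. T_op \<Psi>s k \<omega> x)))\<^sup>2 \<partial>M) \<longlonglongrightarrow> 0"
      unfolding sum_T_op_eq_diff_rem_prod by (simp add: tendsto_integral_rem_prod_zero)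
    show "AE \<omega> in M. (\<lambda>n. \<Sum>k=1..n. T_op \<Psi>s k \<omega> x) \<longlonglongrightarrow> x"
      using AE_rem_prod_LIMSEQ_zero[of x]
    proof eventually_elim
      fix \<omega> assume "(\<lambda>n. rem_prod \<Psi>s n \<omega> x) \<longlonglongrightarrow> 0"
      then have "(\<lambda>n. x - rem_prod \<Psi>s n \<omega> x) \<longlonglongrightarrow> x - 0"
        by (intro tendsto_diff tendsto_const)
      then show "(\<lambda>n. \<Sum>k=1..n. T_op \<Psi>s k \<omega> x) \<longlonglongrightarrow> x"
        unfolding sum_T_op_eq_diff_rem_prod by simp
    qed
    show "(\<lambda>n. \<integral>\<omega>. (\<Sum>k=1..n. (norm (T_op \<Psi>s k \<omega> x))\<^sup>2) \<partial>M) \<longlonglongrightarrow> (norm x)\<^sup>2"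
      unfolding integral_sum_T_op
      using tendsto_diff[OF tendsto_const tendsto_integral_rem_prod_zero, of "(norm x)\<^sup>2" x] by simp
  qed
qed

end
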